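(* Let $A\in\mathrm{Mat}(2,\mathbb{Z})$ have eigenvalues $a,b\in\mathbb{Z}$. Then $\mathrm{Per}(f_A)\supseteq\{1\}\cup P_a\cup P_b$.
   Context: $\mathbb{T}^2=\mathbb{R}^2/\mathbb{Z}^2$; for $A\in\mathrm{Mat}(2,\mathbb{Z})$, $f_A:\mathbb{T}^2\to\mathbb{T}^2$ is $x+\mathbb{Z}^2\mapsto Ax+\mathbb{Z}^2$. $\mathrm{Per}(f)$ is the set of $n\in\mathbb{N}=\{1,2,\dots\}$ such that $f$ has a periodic orbit of least period exactly $n$. For $a\in\mathbb{Z}\setminus\{0\}$, $P_a=\{\mathrm{ord}_n(a): n\ge 2,\ \gcd(a,n)=1\}$, where $\mathrm{ord}_n(a)$ is the least $k>0$ with $a^k\equiv1\pmod n$; by convention $P_0=\emptyset$. *)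

theory Defs
  imports "HOL-Analysis.Analysis" "HOL-Number_Theory.Number_Theory"
begin

text \<open>Points of the torus R^2/Z^2 are represented by vectors in R^2; two vectors
  represent the same torus point iff their difference lies in Z^2.\<close>
definition torus_eq :: "real^2 \<Rightarrow> real^2 \<Rightarrow> bool" where
  "torus_eq x y \<longleftrightarrow> (\<forall>i. (x - y) $ i \<in> \<int>)"

text \<open>The lift of f_A to R^2: x \<mapsto> A x (A an integer 2x2 matrix).
  It respects torus_eq, so it induces f_A on the torus.\<close>
definition linlift :: "int^2^2 \<Rightarrow> real^2 \<Rightarrow> real^2" where
  "linlift A x = (\<chi> i j. real_of_int (A $ i $ j)) *v x"

definition Per_torus :: "int^2^2 \<Rightarrow> nat set" where
  "Per_torus A = {n. n \<ge> 1 \<and> (\<exists>x. torus_eq ((linlift A ^^ n) x) x \<and>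
        (\<forall>k. 1 \<le> k \<and> k < n \<longrightarrow> \<not> torus_eq ((linlift A ^^ k) x) x))}"

definition ord_mod :: "nat \<Rightarrow> int \<Rightarrow> nat" where
  "ord_mod n a = (LEAST k. k > 0 \<and> [a ^ k = 1] (mod int n))"

definition P_set :: "int \<Rightarrow> nat set" where
  "P_set a = (if a = 0 then {} else
     {ord_mod n a | n. n \<ge> 2 \<and> coprime a (int n)})"

definition charpoly2 :: "int^2^2 \<Rightarrow> int poly" where
  "charpoly2 A = [:det A, - trace A, 1:]"

end

theory Submission imports Defs begin

(* Let a be an integer eigenvalue of A, i.e. a root of its
   characteristic polynomial.  Because A - aI is a singular integer matrix, it has a nonzero
   integer kernel vector, and dividing by the gcd of its entries gives a primitive integer
   eigenvector w (coprime entries) with A w = a w.  For n >= 2 coprime to a, consider the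
   rational point x = w/n of the torus.  Its lift satisfies A^k x = a^k w/n, so x returns to
   itself on the torus after k steps iff n divides (a^k - 1) w, and since the entries of w are
   coprime this happens iff a^k = 1 (mod n).  Hence the least period of x is exactly
   ord_n(a), so P_a is contained in Per(f_A); the fixed point 0 gives 1 in Per(f_A). *)

text \<open>A quotient of integers m/n is an integer exactly when n divides m; this converts
  torus equivalence of rational points into a divisibility condition.\<close>
lemma real_div_Ints_iff:
  fixes m :: int and n :: nat
  assumes "n > 0"
  shows "real_of_int m / real n \<in> \<int> \<longleftrightarrow> int n dvd m"
proof
  assume "real_of_int m / real n \<in> \<int>"
  then obtain z where "real_of_int m / real n = of_int z" by (auto elim: Ints_cases)
  hence "real_of_int m = real n * of_int z" using assms by (simp add: field_simps)
  hence "m = int n * z" by (metis of_int_eq_iff of_int_mult of_int_of_nat_eq)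
  thus "int n dvd m" by simp
next
  assume "int n dvd m"
  then obtain z where "m = int n * z" by auto
  thus "real_of_int m / real n \<in> \<int>" using assms by simp
qed

text \<open>If d divides both c u and c v with u, v coprime, then d divides c, because
  gcd (c u) (c v) = |c| gcd u v.\<close>
lemma dvd_of_dvd_coprime_multiples:
  fixes c d u v :: int
  assumes "coprime u v" "d dvd c * u" "d dvd c * v"
  shows "d dvd c"
proof -
  have "d dvd gcd (c * u) (c * v)" using assms by simp
  also have "gcd (c * u) (c * v) = \<bar>c\<bar> * gcd u v" by (simp add: gcd_mult_left abs_mult)
  finally show ?thesis using assms(1) by simp
qed

text \<open>Existence
  of such an exponent comes from Euler's theorem.\<close>
lemma ord_mod_props:
  fixes a :: int and n :: nat
  assumes "n > 0" and "coprime a (int n)"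
  shows ord_mod_pos: "ord_mod n a > 0"
    and ord_mod_cong: "[a ^ ord_mod n a = 1] (mod int n)"
    and ord_mod_minimal: "\<And>k. 0 < k \<Longrightarrow> k < ord_mod n a \<Longrightarrow> \<not> [a ^ k = 1] (mod int n)"
proof -
  have "\<exists>k. k > 0 \<and> [a ^ k = 1] (mod int n)"
  proof (cases "n = 1")
    case True
    thus ?thesis by (intro exI[of _ 1]) simp
  next
    case False
    hence "residues (int n)" using assms(1) by (simp add: residues_def)
    hence "[a ^ totient n = 1] (mod int n)"
      using residues.euler_theorem[OF _ assms(2)] by simp
    thus ?thesis using assms(1) by (intro exI[of _ "totient n"]) simp
  qed
  hence "ord_mod n a > 0 \<and> [a ^ ord_mod n a = 1] (mod int n)"
    unfolding ord_mod_def by (rule LeastI_ex)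
  thus "ord_mod n a > 0" "[a ^ ord_mod n a = 1] (mod int n)" by auto
  show "\<not> [a ^ k = 1] (mod int n)" if "0 < k" "k < ord_mod n a" for k
    using not_less_Least[of k "\<lambda>k. k > 0 \<and> [a ^ k = 1] (mod int n)"] that
    unfolding ord_mod_def by blast
qed

lemma poly_charpoly2: "poly (charpoly2 A) a = det (A - mat a)"
  by (simp add: charpoly2_def det_2 trace_def sum_2 mat_def algebra_simps)

text \<open>A singular 2x2 integer matrix has a nonzero integer kernel vector: one of its rows
  (rotated by 90 degrees) or a unit vector works.\<close>
lemma singular_kernel_vector:
  fixes M :: "int^2^2"
  assumes "det M = 0"
  shows "\<exists>v. v \<noteq> 0 \<and> M *v v = 0"
proof -
  have rel: "M$1$1 * M$2$2 = M$1$2 * M$2$1" using assms by (simp add: det_2)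
  have kernel: "M *v v = 0 \<longleftrightarrow> (\<forall>i. M$i$1 * v$1 + M$i$2 * v$2 = 0)" for v :: "int^2"
    by (simp add: vec_eq_iff matrix_vector_mult_def sum_2)
  have nonzero: "v \<noteq> 0 \<longleftrightarrow> v$1 \<noteq> 0 \<or> v$2 \<noteq> 0" for v :: "int^2"
    by (auto simp: vec_eq_iff forall_2)
  consider "M$1$1 \<noteq> 0 \<or> M$1$2 \<noteq> 0" | "M$2$1 \<noteq> 0 \<or> M$2$2 \<noteq> 0"
    | "M$1$1 = 0" "M$1$2 = 0" "M$2$1 = 0" "M$2$2 = 0" by blast
  thus ?thesis
  proof cases
    case 1
    define v :: "int^2" where "v = (\<chi> i. if i = 1 then M$1$2 else - M$1$1)"
    have "v \<noteq> 0 \<and> M *v v = 0"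
      using 1 rel unfolding kernel nonzero
      by (auto simp: v_def forall_2 algebra_simps)
    thus ?thesis by blast
  next
    case 2
    define v :: "int^2" where "v = (\<chi> i. if i = 1 then M$2$2 else - M$2$1)"
    have "v \<noteq> 0 \<and> M *v v = 0"
      using 2 rel unfolding kernel nonzero
      by (auto simp: v_def forall_2 algebra_simps)
    thus ?thesis by blast
  next
    case 3
    define v :: "int^2" where "v = (\<chi> i. if i = 1 then 1 else 0)"
    have "v \<noteq> 0 \<and> M *v v = 0"
      using 3 unfolding kernel nonzero by (auto simp: v_def forall_2)
    thus ?thesis by blast
  qed
qed

text \<open>Scalars commute with matrix-vector multiplication over any commutative semiring
  (the library states this only over fields).\<close>
lemma matrix_vector_mult_scalar_commute:
  fixes A :: "'a::comm_semiring_1^'n^'m"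
  shows "A *v (c *s x) = c *s (A *v x)"
  by (simp add: vec_eq_iff matrix_vector_mult_def sum_distrib_left mult_ac)

lemma primitive_kernel_vector:
  fixes M :: "int^2^'m" and v :: "int^2"
  assumes "v \<noteq> 0" and "M *v v = 0"
  shows "\<exists>w. coprime (w$1) (w$2) \<and> M *v w = 0"
proof -
  define g where "g = gcd (v$1) (v$2)"
  define w :: "int^2" where "w = (\<chi> i. v$i div g)"
  have entries_nonzero: "v$1 \<noteq> 0 \<or> v$2 \<noteq> 0"
    using assms(1) by (auto simp: vec_eq_iff forall_2)
  hence "g \<noteq> 0" by (simp add: g_def)
  have "v = g *s w"
    by (auto simp: vec_eq_iff forall_2 w_def g_def)
  hence "g *s (M *v w) = 0"
    using assms(2) by (simp only: matrix_vector_mult_scalar_commute)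
  hence "M *v w = 0" using \<open>g \<noteq> 0\<close> by simp
  moreover have "coprime (w$1) (w$2)"
    unfolding w_def g_def using entries_nonzero by (auto intro: div_gcd_coprime)
  ultimately show ?thesis by blast
qed

lemma primitive_eigenvector:
  fixes A :: "int^2^2" and a :: int
  assumes "poly (charpoly2 A) a = 0"
  shows "\<exists>w. coprime (w$1) (w$2) \<and> A *v w = a *s w"
proof -
  have "det (A - mat a) = 0" using assms by (simp add: poly_charpoly2)
  then obtain w where "coprime (w$1) (w$2)" and "(A - mat a) *v w = 0"
    using singular_kernel_vector primitive_kernel_vector by blast
  moreover have "mat a *v w = a *s w"
    by (simp add: vec_eq_iff matrix_vector_mult_def mat_def sum_2 forall_2)
  ultimately show ?thesis by (auto simp: matrix_vector_mult_diff_rdistrib)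
qed

lemma linlift_int_vector:
  "linlift A (\<chi> i. c * of_int (v$i)) = (\<chi> i. c * of_int ((A *v v)$i))"
  by (simp add: linlift_def vec_eq_iff matrix_vector_mult_def sum_2 algebra_simps)

lemma linlift_iterate_eigenvector:
  assumes "A *v w = a *s w"
  shows "(linlift A ^^ k) (\<chi> i. c * of_int (w$i)) = (\<chi> i. c * of_int ((a ^ k *s w)$i))"
proof (induction k)
  case 0
  show ?case by simp
next
  case (Suc k)
  have step: "A *v (a ^ k *s w) = a ^ Suc k *s w"
    using assms by (simp add: matrix_vector_mult_scalar_commute vector_smult_assoc mult.commute)
  have "(linlift A ^^ Suc k) (\<chi> i. c * of_int (w$i))
        = linlift A (\<chi> i. c * of_int ((a ^ k *s w)$i))"
    by (simp only: funpow.simps o_apply Suc.IH)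
  also have "\<dots> = (\<chi> i. c * of_int ((a ^ Suc k *s w)$i))"
    by (simp only: linlift_int_vector step)
  finally show ?case .
qed

lemma eigenvector_point_returns_iff:
  fixes A :: "int^2^2" and w :: "int^2" and n :: nat
  assumes eig: "A *v w = a *s w" and prim: "coprime (w$1) (w$2)" and "n > 0"
  defines "x \<equiv> \<chi> i. (1 / real n) * of_int (w$i)"
  shows "torus_eq ((linlift A ^^ k) x) x \<longleftrightarrow> [a ^ k = 1] (mod int n)"
proof -
  have "torus_eq ((linlift A ^^ k) x) x \<longleftrightarrow>
        (\<forall>i. real_of_int ((a ^ k - 1) * w$i) / real n \<in> \<int>)"
    unfolding torus_eq_def x_def linlift_iterate_eigenvector[OF eig]
    by (simp add: algebra_simps diff_divide_distrib)
  also have "\<dots> \<longleftrightarrow> (\<forall>i. int n dvd (a ^ k - 1) * w$i)"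
    by (simp only: real_div_Ints_iff[OF \<open>n > 0\<close>])
  also have "\<dots> \<longleftrightarrow> int n dvd a ^ k - 1"
  proof
    assume "\<forall>i. int n dvd (a ^ k - 1) * w$i"
    thus "int n dvd a ^ k - 1" using dvd_of_dvd_coprime_multiples[OF prim] by blast
  qed simp
  also have "\<dots> \<longleftrightarrow> [a ^ k = 1] (mod int n)"
    by (rule cong_iff_dvd_diff[symmetric])
  finally show ?thesis .
qed

lemma ord_mod_in_Per_torus:
  fixes A :: "int^2^2" and w :: "int^2" and n :: nat
  assumes eig: "A *v w = a *s w" and prim: "coprime (w$1) (w$2)"
    and "n > 0" and "coprime a (int n)"
  shows "ord_mod n a \<in> Per_torus A"
proof -
  define x :: "real^2" where "x = (\<chi> i. (1 / real n) * of_int (w$i))"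
  note returns = eigenvector_point_returns_iff[OF eig prim \<open>n > 0\<close>, folded x_def]
  have "torus_eq ((linlift A ^^ ord_mod n a) x) x"
    using returns ord_mod_cong[OF assms(3,4)] by blast
  moreover have "\<forall>k. 1 \<le> k \<and> k < ord_mod n a \<longrightarrow> \<not> torus_eq ((linlift A ^^ k) x) x"
    using returns ord_mod_minimal[OF assms(3,4)] by auto
  moreover have "ord_mod n a \<ge> 1" using ord_mod_pos[OF assms(3,4)] by simp
  ultimately show ?thesis unfolding Per_torus_def by blast
qed

lemma P_set_subset_Per_torus:
  fixes A :: "int^2^2" and a :: int
  assumes "poly (charpoly2 A) a = 0"
  shows "P_set a \<subseteq> Per_torus A"
proof
  fix m assume "m \<in> P_set a"
  then obtain n where m: "m = ord_mod n a" and "n \<ge> 2" and "coprime a (int n)"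
    unfolding P_set_def by (auto split: if_splits)
  obtain w where prim: "coprime (w$1) (w$2)" and eig: "A *v w = a *s w"
    using primitive_eigenvector[OF assms] by blast
  have "n > 0" using \<open>n \<ge> 2\<close> by simp
  thus "m \<in> Per_torus A"
    unfolding m using ord_mod_in_Per_torus[OF eig prim _ \<open>coprime a (int n)\<close>] by blast
qed

lemma one_in_Per_torus: "1 \<in> Per_torus A"
  unfolding Per_torus_def torus_eq_def by (auto intro!: exI[of _ 0] simp: linlift_def)

theorem proposition4:
  fixes A :: "int^2^2" and a b :: int
  assumes "charpoly2 A = [:-a, 1:] * [:-b, 1:]"
  shows "{1} \<union> P_set a \<union> P_set b \<subseteq> Per_torus A"
proof -
  have "poly (charpoly2 A) a = 0" and "poly (charpoly2 A) b = 0"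
    unfolding assms by simp_all
  thus ?thesis
    using P_set_subset_Per_torus one_in_Per_torus by blast
qed

end
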